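(* Let $a_1,a_2$ be nonzero integers and $(U_n)_{n\ge0}$ the Lucas sequence with $U_0=0$, $U_1=1$, $U_n=a_1U_{n-1}+a_2U_{n-2}$; let $\alpha,\beta$ be the roots of $X^2-a_1X-a_2$, assume $\alpha/\beta$ is not a root of unity and $\Delta:=a_1^2+4a_2$ is not a square. For every positive integer $d$ and every $x>1$, \[ \mathcal{R}_U(d;x)=\sum_{v\mid d^\infty}\sum_{a\mid d}\mu(a)\,\pi_{U,dv,av}(x), \] where the primes dividing $a_2\Delta$ are ignored in all counts.
   Context: $\rho_U(p)$ is the smallest positive integer $k$ with $p\mid U_k$; for $p\nmid a_2\Delta$, $\iota_U(p):=\big(p-\big(\tfrac{\Delta}{p}\big)\big)/\rho_U(p)$, with $\big(\tfrac{\Delta}{p}\big)$ the Legendre symbol. $\mathcal{R}_U(d;x):=\#\{p\le x:\ p\nmid a_2,\ d\mid\rho_U(p)\}$. For positive integers $m\mid n$, $\pi_{U,n,m}(x):=\#\{p\le x:\ p\nmid a_2\Delta,\ p\equiv\big(\tfrac{\Delta}{p}\big)\pmod n,\ m\mid\iota_U(p)\}$. The sum over $v\mid d^\infty$ runs over all positive integers $v$ all of whose prime factors divide $d$. $\mu$ is the Möbius function. *)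

theory Defs
  imports "HOL-Analysis.Analysis" "HOL-Number_Theory.Number_Theory"
    "HOL-Computational_Algebra.Squarefree"
begin

fun lucasU :: "int \<Rightarrow> int \<Rightarrow> nat \<Rightarrow> int" where
  "lucasU a1 a2 0 = 0"
| "lucasU a1 a2 (Suc 0) = 1"
| "lucasU a1 a2 (Suc (Suc n)) = a1 * lucasU a1 a2 (Suc n) + a2 * lucasU a1 a2 n"

definition disc :: "int \<Rightarrow> int \<Rightarrow> int" where
  "disc a1 a2 = a1^2 + 4 * a2"

definition lalpha :: "int \<Rightarrow> int \<Rightarrow> complex" where
  "lalpha a1 a2 = (of_int a1 + csqrt (of_int (disc a1 a2))) / 2"
definition lbeta :: "int \<Rightarrow> int \<Rightarrow> complex" where
  "lbeta a1 a2 = (of_int a1 - csqrt (of_int (disc a1 a2))) / 2"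

definition rhoU :: "int \<Rightarrow> int \<Rightarrow> nat \<Rightarrow> nat" where
  "rhoU a1 a2 p = (LEAST k. 0 < k \<and> int p dvd lucasU a1 a2 k)"

text \<open>Symbol (Delta/p): Legendre symbol for odd p; for p = 2 the Kronecker
  symbol convention.\<close>
definition symb :: "int \<Rightarrow> nat \<Rightarrow> int" where
  "symb D p = (if p = 2 then (if even D then 0 else if D mod 8 \<in> {1, 7} then 1 else -1)
               else Legendre D (int p))"

definition iotaU :: "int \<Rightarrow> int \<Rightarrow> nat \<Rightarrow> int" where
  "iotaU a1 a2 p = (int p - symb (disc a1 a2) p) div int (rhoU a1 a2 p)"

definition RU :: "int \<Rightarrow> int \<Rightarrow> nat \<Rightarrow> real \<Rightarrow> nat" where
  "RU a1 a2 d x = card {p. prime p \<and> real p \<le> x \<and> \<not> int p dvd a2 * disc a1 a2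
                          \<and> d dvd rhoU a1 a2 p}"

definition piU :: "int \<Rightarrow> int \<Rightarrow> nat \<Rightarrow> nat \<Rightarrow> real \<Rightarrow> nat" where
  "piU a1 a2 n m x = card {p. prime p \<and> real p \<le> x \<and> \<not> int p dvd a2 * disc a1 a2
       \<and> [int p = symb (disc a1 a2) p] (mod int n) \<and> int m dvd iotaU a1 a2 p}"

definition mu :: "nat \<Rightarrow> int" where
  "mu n = (if n = 0 \<or> \<not> squarefree n then 0 else (-1) ^ card (prime_factors n))"

end

theory Submission
  imports Defs
begin

text \<open>For a prime \<open>p \<nmid> a\<^sub>2\<Delta>\<close> the binomial expansion of the Binet formulas and Euler's
  criterion give \<open>p | U\<^bsub>p - (\<Delta>/p)\<^esub>\<close>, so \<open>\<rho>\<^sub>U(p)\<close> divides \<open>p - (\<Delta>/p)\<close> and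
  \<open>p - (\<Delta>/p) = \<rho>\<^sub>U(p) \<iota>\<^sub>U(p)\<close>. Write \<open>\<iota>\<^sub>U(p) = v\<^sub>0 k\<close> with \<open>v\<^sub>0 | d\<^sup>\<infinity>\<close> and
  \<open>gcd(d, k) = 1\<close>. For \<open>v | d\<^sup>\<infinity>\<close> the Moebius sum \<open>\<Sum>\<^bsub>a | d\<^esub> \<mu>(a) [a v | \<iota>\<^sub>U(p)]\<close> equals
  \<open>[v = v\<^sub>0]\<close>, so each prime contributes to the double sum exactly once, with weight
  \<open>[d v\<^sub>0 | \<rho>\<^sub>U(p) v\<^sub>0 k] = [d | \<rho>\<^sub>U(p)]\<close>.\<close>

section \<open>Rank of appearance\<close>

lemma lucasU_add:
  "lucasU a1 a2 (m + n + 1) =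
     lucasU a1 a2 (m + 1) * lucasU a1 a2 (n + 1) + a2 * lucasU a1 a2 m * lucasU a1 a2 n"
proof (induction m rule: induct_nat_012)
  case (ge2 m)
  have "lucasU a1 a2 (Suc (Suc m) + n + 1) =
          a1 * lucasU a1 a2 (Suc m + n + 1) + a2 * lucasU a1 a2 (m + n + 1)"
    by simp
  also have "\<dots> = lucasU a1 a2 (Suc (Suc m) + 1) * lucasU a1 a2 (n + 1)
                    + a2 * lucasU a1 a2 (Suc (Suc m)) * lucasU a1 a2 n"
    unfolding ge2.IH by (simp add: algebra_simps)
  finally show ?case .
qed simp_all

lemma not_dvd_consecutive_lucasU:
  assumes "prime p" "\<not> int p dvd a2"
  shows "\<not> (int p dvd lucasU a1 a2 (Suc k) \<and> int p dvd lucasU a1 a2 k)"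
proof (induction k)
  case 0
  show ?case using prime_gt_1_nat[OF assms(1)] by simp
next
  case (Suc k)
  show ?case
  proof
    assume dvd: "int p dvd lucasU a1 a2 (Suc (Suc k)) \<and> int p dvd lucasU a1 a2 (Suc k)"
    then have "int p dvd a2 * lucasU a1 a2 k"
      by (metis dvd_add_right_iff dvd_mult lucasU.simps(3))
    moreover have "prime (int p)" using assms(1) by simp
    ultimately have "int p dvd lucasU a1 a2 k"
      using assms(2) by (simp add: prime_dvd_mult_iff)
    then show False using Suc.IH dvd by blast
  qed
qed

lemma dvd_lucasU_add_iff:
  assumes p: "prime p" "\<not> int p dvd a2" and n: "int p dvd lucasU a1 a2 n" "0 < n"
  shows "int p dvd lucasU a1 a2 (m + n) \<longleftrightarrow> int p dvd lucasU a1 a2 m"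
proof -
  obtain n' where n': "n = Suc n'" using n(2) by (cases n) auto
  have "\<not> int p dvd lucasU a1 a2 n'"
    using not_dvd_consecutive_lucasU[OF p, of a1 n'] n n' by auto
  moreover have "prime (int p)" using p(1) by simp
  ultimately have "int p dvd a2 * lucasU a1 a2 m * lucasU a1 a2 n' \<longleftrightarrow> int p dvd lucasU a1 a2 m"
    using p(2) by (simp add: prime_dvd_mult_iff)
  moreover have "lucasU a1 a2 (m + n) =
      lucasU a1 a2 (m + 1) * lucasU a1 a2 n + a2 * lucasU a1 a2 m * lucasU a1 a2 n'"
    using lucasU_add[of a1 a2 m n'] n' by simp
  ultimately show ?thesis
    using n(1) by (simp add: dvd_add_right_iff)
qed

lemma rhoU_dvd:
  assumes p: "prime p" "\<not> int p dvd a2" and N: "0 < N" "int p dvd lucasU a1 a2 N"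
  shows "rhoU a1 a2 p dvd N"
  using N
proof (induction N rule: less_induct)
  case (less N)
  let ?r = "rhoU a1 a2 p"
  have "0 < ?r \<and> int p dvd lucasU a1 a2 ?r"
    unfolding rhoU_def by (rule LeastI[of _ N]) (use less.prems in simp)
  then have r: "0 < ?r" "int p dvd lucasU a1 a2 ?r" by auto
  have "?r \<le> N"
    using less.prems unfolding rhoU_def by (simp add: Least_le)
  then obtain j where j: "N = j + ?r"
    by (metis le_add_diff_inverse2)
  have "int p dvd lucasU a1 a2 j"
    using dvd_lucasU_add_iff[OF p r(2) r(1), where m = j] less.prems(2) j by simp
  then have "?r dvd j"
    using less.IH[of j] j r(1) by (cases "j = 0") auto
  then show ?case
    using j by simp
qed

section \<open>Lucas sequences modulo primes\<close>

fun lucasV :: "int \<Rightarrow> int \<Rightarrow> nat \<Rightarrow> int" where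
  "lucasV a1 a2 0 = 2"
| "lucasV a1 a2 (Suc 0) = a1"
| "lucasV a1 a2 (Suc (Suc n)) = a1 * lucasV a1 a2 (Suc n) + a2 * lucasV a1 a2 n"

lemma two_mult_lucasU_Suc: "2 * lucasU a1 a2 (Suc n) = a1 * lucasU a1 a2 n + lucasV a1 a2 n"
proof (induction n rule: induct_nat_012)
  case (ge2 n)
  have "2 * lucasU a1 a2 (Suc (Suc (Suc n)))
      = a1 * (2 * lucasU a1 a2 (Suc (Suc n))) + a2 * (2 * lucasU a1 a2 (Suc n))"
    by (simp add: algebra_simps)
  also have "\<dots> = a1 * lucasU a1 a2 (Suc (Suc n)) + lucasV a1 a2 (Suc (Suc n))"
    unfolding ge2.IH by (simp add: algebra_simps)
  finally show ?case .
qed simp_all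

lemma binet:
  fixes t :: "'a::comm_ring_1"
  assumes "t\<^sup>2 = of_int (disc a1 a2)"
  shows "2 * (of_int a1 + t) ^ n = 2 ^ n * (of_int (lucasV a1 a2 n) + t * of_int (lucasU a1 a2 n))"
proof (induction n rule: induct_nat_012)
  case (ge2 n)
  let ?x = "of_int a1 + t"
  have "?x ^ Suc (Suc n) = ?x\<^sup>2 * ?x ^ n"
    by (simp add: power2_eq_square mult.assoc)
  also have "?x\<^sup>2 = 2 * of_int a1 * ?x + 4 * of_int a2"
    using assms by (simp add: disc_def power2_eq_square algebra_simps)
  also have "(2 * of_int a1 * ?x + 4 * of_int a2) * ?x ^ n
      = 2 * of_int a1 * ?x ^ Suc n + 4 * of_int a2 * ?x ^ n"
    by (simp add: algebra_simps)
  finally have rec: "?x ^ Suc (Suc n) = 2 * of_int a1 * ?x ^ Suc n + 4 * of_int a2 * ?x ^ n" .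
  have "2 * ?x ^ Suc (Suc n) = 2 * of_int a1 * (2 * ?x ^ Suc n) + 4 * of_int a2 * (2 * ?x ^ n)"
    unfolding rec by (simp add: algebra_simps)
  also have "\<dots> = 2 ^ Suc (Suc n) *
      (of_int (lucasV a1 a2 (Suc (Suc n))) + t * of_int (lucasU a1 a2 (Suc (Suc n))))"
    unfolding ge2.IH by (simp add: algebra_simps)
  finally show ?case .
qed simp_all

text \<open>Binomial expansion \<open>(a + \<surd>D)\<^sup>n = pow_rat_part a D n + \<surd>D * pow_sqrt_part a D n\<close>.\<close>

definition pow_rat_part :: "int \<Rightarrow> int \<Rightarrow> nat \<Rightarrow> int" where
  "pow_rat_part a D n = (\<Sum>k\<le>n. int (n choose k) * (if even k then a ^ (n - k) * D ^ (k div 2) else 0))"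

definition pow_sqrt_part :: "int \<Rightarrow> int \<Rightarrow> nat \<Rightarrow> int" where
  "pow_sqrt_part a D n = (\<Sum>k\<le>n. int (n choose k) * (if odd k then a ^ (n - k) * D ^ (k div 2) else 0))"

lemma power_sqrt_expansion:
  fixes t :: "'a::comm_ring_1"
  assumes "t\<^sup>2 = of_int D"
  shows "(of_int a + t) ^ n = of_int (pow_rat_part a D n) + t * of_int (pow_sqrt_part a D n)"
proof -
  have t_power: "t ^ k = (if even k then 1 else t) * of_int (D ^ (k div 2))" for k
  proof -
    have "t ^ k = (t\<^sup>2) ^ (k div 2) * t ^ (k mod 2)"
      by (metis mult_div_mod_eq power_add power_mult)
    then show ?thesis
      using assms by (simp add: odd_iff_mod_2_eq_one)
  qed
  have "(of_int a + t) ^ n = (\<Sum>k\<le>n. of_nat (n choose k) * t ^ k * of_int a ^ (n - k))"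
    using binomial_ring[of t "of_int a" n] by (simp add: add.commute)
  also have "\<dots> = (\<Sum>k\<le>n. of_int (int (n choose k) * (if even k then a ^ (n - k) * D ^ (k div 2) else 0))
       + t * of_int (int (n choose k) * (if odd k then a ^ (n - k) * D ^ (k div 2) else 0)))"
    by (intro sum.cong refl) (simp add: t_power mult_ac)
  also have "\<dots> = of_int (pow_rat_part a D n) + t * of_int (pow_sqrt_part a D n)"
    by (simp add: pow_rat_part_def pow_sqrt_part_def sum.distrib sum_distrib_left)
  finally show ?thesis .
qed

lemma eq_parts_of_conjugate_eqs:
  fixes x y z w c s :: "'a::field_char_0"
  assumes "2 * (x + s * y) = c * (z + s * w)" "2 * (x - s * y) = c * (z - s * w)"
  shows "2 * x = c * z" and "s \<noteq> 0 \<Longrightarrow> 2 * y = c * w"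
proof -
  have "4 * x = 2 * (x + s * y) + 2 * (x - s * y)" by (simp add: algebra_simps)
  also have "\<dots> = 2 * (c * z)" unfolding assms by (simp add: algebra_simps)
  finally show "2 * x = c * z" by simp
  assume "s \<noteq> 0"
  have "s * (4 * y) = 2 * (x + s * y) - 2 * (x - s * y)" by (simp add: algebra_simps)
  also have "\<dots> = s * (2 * (c * w))" unfolding assms by (simp add: algebra_simps)
  finally show "2 * y = c * w" using \<open>s \<noteq> 0\<close> by simp
qed

lemma two_pow_lucasV:
  "2 ^ n * lucasV a1 a2 n = 2 * pow_rat_part a1 (disc a1 a2) n"
  and two_pow_lucasU:
  "disc a1 a2 \<noteq> 0 \<Longrightarrow> 2 ^ n * lucasU a1 a2 n = 2 * pow_sqrt_part a1 (disc a1 a2) n"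
proof -
  define s where "s = csqrt (of_int (disc a1 a2))"
  define c where "c = (2 :: complex) ^ n"
  have s: "s\<^sup>2 = of_int (disc a1 a2)" "(- s)\<^sup>2 = of_int (disc a1 a2)"
    unfolding s_def by simp_all
  let ?A = "of_int (pow_rat_part a1 (disc a1 a2) n) :: complex"
  and ?B = "of_int (pow_sqrt_part a1 (disc a1 a2) n) :: complex"
  and ?U = "of_int (lucasU a1 a2 n) :: complex" and ?V = "of_int (lucasV a1 a2 n) :: complex"
  have plus: "2 * (?A + s * ?B) = c * (?V + s * ?U)"
    using binet[OF s(1)] power_sqrt_expansion[OF s(1)] c_def by simp
  have minus: "2 * (?A - s * ?B) = c * (?V - s * ?U)"
    using binet[OF s(2)] power_sqrt_expansion[OF s(2)] c_def by simp
  have "2 * ?A = c * ?V"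
    using eq_parts_of_conjugate_eqs(1)[OF plus minus] .
  then have "(of_int (2 ^ n * lucasV a1 a2 n) :: complex) = of_int (2 * pow_rat_part a1 (disc a1 a2) n)"
    by (simp add: c_def)
  then show "2 ^ n * lucasV a1 a2 n = 2 * pow_rat_part a1 (disc a1 a2) n"
    by (simp only: of_int_eq_iff)
  assume "disc a1 a2 \<noteq> 0"
  then have "s \<noteq> 0"
    using s(1) by auto
  then have "2 * ?B = c * ?U"
    by (rule eq_parts_of_conjugate_eqs(2)[OF plus minus])
  then have "(of_int (2 ^ n * lucasU a1 a2 n) :: complex) = of_int (2 * pow_sqrt_part a1 (disc a1 a2) n)"
    by (simp add: c_def)
  then show "2 ^ n * lucasU a1 a2 n = 2 * pow_sqrt_part a1 (disc a1 a2) n"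
    by (simp only: of_int_eq_iff)
qed

lemma sum_binomial_prime_cong:
  assumes "prime p"
  shows "[(\<Sum>k\<le>p. int (p choose k) * f k) = f 0 + f p] (mod int p)"
proof -
  have p: "1 < p" using assms prime_gt_1_nat by blast
  have "{..p} = insert 0 (insert p {1..<p})" using p by auto
  then have "(\<Sum>k\<le>p. int (p choose k) * f k) = f 0 + f p + (\<Sum>k\<in>{1..<p}. int (p choose k) * f k)"
    using p by simp
  moreover have "[(\<Sum>k\<in>{1..<p}. int (p choose k) * f k) = 0] (mod int p)"
    using assms by (intro cong_sum[where g = "\<lambda>_. 0", simplified])
      (auto simp: cong_0_iff dvd_choose_prime)
  ultimately show ?thesis
    by (metis cong_add_lcancel_0)
qed

lemma fermat_int:
  assumes "prime p"
  shows "[a ^ p = a] (mod int p)"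
proof -
  define n where "n = nat (a mod int p)"
  have p: "0 < p" using assms prime_gt_0_nat by blast
  have a: "[a = int n] (mod int p)"
    unfolding n_def using p by (simp add: cong_def)
  have "[n ^ p = n] (mod p)"
  proof (cases "p dvd n")
    case True
    then show ?thesis
      using p by (metis cong_0_iff cong_sym cong_trans dvd_power dvd_trans)
  next
    case False
    have "[n ^ (p - 1) * n = 1 * n] (mod p)"
      using fermat_theorem[OF assms False] by (rule cong_mult) simp
    then show ?thesis
      using p by (metis Suc_diff_1 mult_1 power_Suc2)
  qed
  then have "[int n ^ p = int n] (mod int p)"
    by (metis cong_int_iff of_nat_power)
  then show ?thesis
    using a by (meson cong_pow cong_sym cong_trans)
qed

lemma lucas_prime_cong:
  assumes p: "prime p" "odd p" and D: "\<not> int p dvd disc a1 a2"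
  shows "[lucasU a1 a2 p = Legendre (disc a1 a2) (int p)] (mod int p)"
    and "[lucasV a1 a2 p = a1] (mod int p)"
proof -
  let ?D = "disc a1 a2"
  have two: "coprime 2 (int p)" using p(2) by simp
  have two_pow: "[2 ^ p * u = 2 * u] (mod int p)" for u :: int
    by (intro cong_mult cong_refl fermat_int p(1))
  have "2 < p" using prime_ge_2_nat[OF p(1)] p(2) by (cases "p = 2") auto
  have "p div 2 = (p - 1) div 2" using p(2) by (auto elim: oddE)
  then have "[pow_sqrt_part a1 ?D p = ?D ^ ((p - 1) div 2)] (mod int p)"
    using sum_binomial_prime_cong[OF p(1), of "\<lambda>k. if odd k then a1 ^ (p - k) * ?D ^ (k div 2) else 0"] p(2)
    unfolding pow_sqrt_part_def by simp
  also have "[?D ^ ((p - 1) div 2) = Legendre ?D (int p)] (mod int p)"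
    using euler_criterion[OF p(1) \<open>2 < p\<close>, of ?D] by (rule cong_sym)
  finally have sqrt_part: "[pow_sqrt_part a1 ?D p = Legendre ?D (int p)] (mod int p)" .
  have "[2 * lucasU a1 a2 p = 2 ^ p * lucasU a1 a2 p] (mod int p)"
    using two_pow by (rule cong_sym)
  also have "2 ^ p * lucasU a1 a2 p = 2 * pow_sqrt_part a1 ?D p"
    using D by (intro two_pow_lucasU) auto
  also have "[2 * pow_sqrt_part a1 ?D p = 2 * Legendre ?D (int p)] (mod int p)"
    using sqrt_part by (rule cong_scalar_left)
  finally show "[lucasU a1 a2 p = Legendre ?D (int p)] (mod int p)"
    using cong_mult_lcancel[OF two] by blast
  have "[pow_rat_part a1 ?D p = a1 ^ p] (mod int p)"
    using sum_binomial_prime_cong[OF p(1), of "\<lambda>k. if even k then a1 ^ (p - k) * ?D ^ (k div 2) else 0"] p(2)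
    unfolding pow_rat_part_def by simp
  also have "[a1 ^ p = a1] (mod int p)"
    using p(1) by (rule fermat_int)
  finally have rat_part: "[pow_rat_part a1 ?D p = a1] (mod int p)" .
  have "[2 * lucasV a1 a2 p = 2 ^ p * lucasV a1 a2 p] (mod int p)"
    using two_pow by (rule cong_sym)
  also have "2 ^ p * lucasV a1 a2 p = 2 * pow_rat_part a1 ?D p"
    by (rule two_pow_lucasV)
  also have "[2 * pow_rat_part a1 ?D p = 2 * a1] (mod int p)"
    using rat_part by (rule cong_scalar_left)
  finally show "[lucasV a1 a2 p = a1] (mod int p)"
    using cong_mult_lcancel[OF two] by blast
qed

lemma prime_dvd_lucasU_Legendre:
  assumes p: "prime p" "odd p" and nd: "\<not> int p dvd a2 * disc a1 a2"
  shows "int p dvd lucasU a1 a2 (nat (int p - Legendre (disc a1 a2) (int p)))"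
proof -
  let ?e = "Legendre (disc a1 a2) (int p)"
  have a2: "\<not> int p dvd a2" and D: "\<not> int p dvd disc a1 a2"
    using nd by auto
  note U = lucas_prime_cong(1)[OF p D] and V = lucas_prime_cong(2)[OF p D]
  have two: "coprime 2 (int p)" using p(2) by simp
  have "[a1 * lucasU a1 a2 p + lucasV a1 a2 p = a1 * ?e + a1] (mod int p)"
    using U V by (intro cong_add cong_scalar_left)
  then have U_Suc: "[2 * lucasU a1 a2 (p + 1) = a1 * ?e + a1] (mod int p)"
    using two_mult_lucasU_Suc[of a1 a2 p] by simp
  have "?e = 1 \<or> ?e = -1"
    using D by (auto simp: Legendre_def cong_0_iff)
  then show ?thesis
  proof
    assume e: "?e = 1"
    have "[2 * lucasU a1 a2 (p + 1) = 2 * a1] (mod int p)"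
      using U_Suc e by simp
    then have U_Suc': "[lucasU a1 a2 (p + 1) = a1] (mod int p)"
      using cong_mult_lcancel[OF two] by blast
    have "Suc (p - 1) = p"
      using prime_gt_0_nat[OF p(1)] by simp
    then have rec: "lucasU a1 a2 (p + 1) = a1 * lucasU a1 a2 p + a2 * lucasU a1 a2 (p - 1)"
      using lucasU.simps(3)[of a1 a2 "p - 1"] by simp
    have "[a1 * lucasU a1 a2 p = a1 * 1] (mod int p)"
      using cong_scalar_left[OF U, of a1] e by simp
    then have "[lucasU a1 a2 (p + 1) = a1 * 1 + a2 * lucasU a1 a2 (p - 1)] (mod int p)"
      unfolding rec by (rule cong_add) (rule cong_refl)
    then have "[a1 + a2 * lucasU a1 a2 (p - 1) = a1 + 0] (mod int p)"
      using cong_trans[OF cong_sym U_Suc'] by simp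
    then have "int p dvd a2 * lucasU a1 a2 (p - 1)"
      by (simp only: cong_add_lcancel cong_0_iff)
    moreover have "prime (int p)" using p(1) by simp
    ultimately have "int p dvd lucasU a1 a2 (p - 1)"
      using a2 by (simp add: prime_dvd_mult_iff)
    then show ?thesis
      using e prime_gt_1_nat[OF p(1)] by (simp add: nat_diff_distrib)
  next
    assume e: "?e = -1"
    have "[2 * lucasU a1 a2 (p + 1) = 2 * 0] (mod int p)"
      using U_Suc e by simp
    then have "[lucasU a1 a2 (p + 1) = 0] (mod int p)"
      using cong_mult_lcancel[OF two] by blast
    then show ?thesis
      using e by (simp add: cong_0_iff nat_add_distrib)
  qed
qed

lemma symb_two_and_dvd_lucasU_three:
  assumes "\<not> 2 dvd a2 * disc a1 a2"
  shows "symb (disc a1 a2) 2 = -1" "2 dvd lucasU a1 a2 3"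
proof -
  have a2: "odd a2" and D: "odd (disc a1 a2)" using assms by auto
  then have a1: "odd a1" by (simp add: disc_def)
  obtain t u where a: "a1 = 2 * t + 1" "a2 = 2 * u + 1"
    using a1 a2 by (auto elim!: oddE)
  have "even (t * (t + 1))"
    by simp
  then obtain w where "t * (t + 1) = 2 * w"
    by (rule evenE)
  then have "disc a1 a2 = 8 * (w + u) + 5"
    unfolding disc_def a by (simp add: power2_eq_square algebra_simps)
  then have "disc a1 a2 mod 8 = 5"
    by presburger
  then show "symb (disc a1 a2) 2 = -1"
    unfolding symb_def using D by simp
  show "2 dvd lucasU a1 a2 3"
    using a1 a2 by (simp add: numeral_3_eq_3)
qed

lemma prime_dvd_lucasU_symb:
  assumes p: "prime p" and nd: "\<not> int p dvd a2 * disc a1 a2"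
  shows "0 < int p - symb (disc a1 a2) p"
    and "int p dvd lucasU a1 a2 (nat (int p - symb (disc a1 a2) p))"
proof -
  show "0 < int p - symb (disc a1 a2) p"
    using prime_ge_2_nat[OF p] by (simp add: symb_def Legendre_def)
  show "int p dvd lucasU a1 a2 (nat (int p - symb (disc a1 a2) p))"
  proof (cases "p = 2")
    case True
    then show ?thesis
      using symb_two_and_dvd_lucasU_three[of a2 a1] nd by simp
  next
    case False
    then have "odd p"
      using prime_odd_nat[OF p] prime_ge_2_nat[OF p] by simp
    then show ?thesis
      using prime_dvd_lucasU_Legendre[OF p _ nd] False by (simp add: symb_def)
  qed
qed

lemma rhoU_mult_iotaU:
  assumes "prime p" "\<not> int p dvd a2 * disc a1 a2"
  shows "int p - symb (disc a1 a2) p = int (rhoU a1 a2 p) * iotaU a1 a2 p"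
    and "0 < rhoU a1 a2 p" and "0 < iotaU a1 a2 p"
proof -
  let ?N = "int p - symb (disc a1 a2) p"
  have "0 < ?N" by (rule prime_dvd_lucasU_symb(1)[OF assms])
  have "\<not> int p dvd a2" using assms(2) by auto
  then have "rhoU a1 a2 p dvd nat ?N"
    using prime_dvd_lucasU_symb(2)[OF assms] \<open>0 < ?N\<close> by (intro rhoU_dvd[OF assms(1)]) auto
  then show "0 < rhoU a1 a2 p"
    using \<open>0 < ?N\<close> by (cases "rhoU a1 a2 p = 0") auto
  have "int (rhoU a1 a2 p) dvd int (nat ?N)"
    using \<open>rhoU a1 a2 p dvd nat ?N\<close> by (simp only: int_dvd_int_iff)
  then have "int (rhoU a1 a2 p) dvd ?N"
    using \<open>0 < ?N\<close> by simp
  then show N: "?N = int (rhoU a1 a2 p) * iotaU a1 a2 p"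
    unfolding iotaU_def by simp
  then have "0 < int (rhoU a1 a2 p) * iotaU a1 a2 p"
    using \<open>0 < ?N\<close> by simp
  then show "0 < iotaU a1 a2 p"
    by (simp add: zero_less_mult_iff)
qed

section \<open>Moebius sums over the divisors of powers of \<open>d\<close>\<close>

lemma has_sum_sum:
  fixes f :: "'i \<Rightarrow> 'a \<Rightarrow> 'b::topological_comm_monoid_add"
  assumes "finite I" "\<And>i. i \<in> I \<Longrightarrow> (f i has_sum s i) A"
  shows "((\<lambda>x. \<Sum>i\<in>I. f i x) has_sum (\<Sum>i\<in>I. s i)) A"
  using assms by (induction I rule: finite_induct) (auto intro: has_sum_add)

lemma
  fixes T :: "nat set"
  assumes "finite T" "\<And>p. p \<in> T \<Longrightarrow> prime p"
  shows prime_factors_prod_primes: "prime_factors (\<Prod>T) = T"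
    and squarefree_prod_primes: "squarefree (\<Prod>T)"
    and mu_prod_primes: "mu (\<Prod>T) = (-1) ^ card T"
proof -
  have "0 \<notin> T" using assms(2) by force
  then have "prime_factors (\<Prod>T) = (\<Union>p\<in>T. prime_factors p)"
    using prime_factors_prod[OF assms(1), of id] by simp
  also have "\<dots> = T" using assms(2) prime_prime_factors by auto
  finally show pf: "prime_factors (\<Prod>T) = T" .
  show sf: "squarefree (\<Prod>T)"
    using squarefree_prod_coprime[of T id] assms(2) by (simp add: primes_coprime squarefree_prime)
  show "mu (\<Prod>T) = (-1) ^ card T"
    using sf pf \<open>0 \<notin> T\<close> assms(1) by (simp add: mu_def)
qed

lemma prod_prime_factors_squarefree:
  assumes "squarefree (a :: nat)"
  shows "\<Prod>(prime_factors a) = a"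
proof -
  have a: "a \<noteq> 0" using assms by (metis not_squarefree_0)
  have "(\<Prod>p\<in>prime_factors a. p ^ multiplicity p a) = a"
    using prod_prime_factors[OF a] by simp
  moreover have "multiplicity p a = 1" if "p \<in> prime_factors a" for p
    using squarefree_factorial_semiring'[OF a] assms that by blast
  ultimately show ?thesis by simp
qed

lemma squarefree_divisors_eq:
  assumes "0 < (n :: nat)"
  shows "{a. a dvd n \<and> squarefree a} = Prod ` Pow (prime_factors n)"
proof (intro equalityI subsetI)
  fix a assume a: "a \<in> {a. a dvd n \<and> squarefree a}"
  then have "prime_factors a \<subseteq> prime_factors n"
    using assms by (simp add: dvd_prime_factors)
  then show "a \<in> Prod ` Pow (prime_factors n)"
    using prod_prime_factors_squarefree[of a] a by (intro image_eqI[where x = "prime_factors a"]) auto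
next
  fix a assume "a \<in> Prod ` Pow (prime_factors n)"
  then obtain T where T: "T \<subseteq> prime_factors n" and a: "a = \<Prod>T" by blast
  have primes: "\<And>p. p \<in> T \<Longrightarrow> prime p" using T by auto
  have "\<Prod>T dvd \<Prod>(prime_factors n)"
    using T by (simp add: prod_dvd_prod_subset)
  also have "\<dots> dvd (\<Prod>p\<in>prime_factors n. p ^ multiplicity p n)"
    by (intro prod_dvd_prod) (simp add: prime_factors_multiplicity)
  also have "\<dots> = n"
    using prod_prime_factors[of n] assms by simp
  finally show "a \<in> {a. a dvd n \<and> squarefree a}"
    using a squarefree_prod_primes[OF finite_subset[OF T] primes] T by simp
qed

lemma sum_mu_divisors:
  assumes "0 < n"
  shows "(\<Sum>a | a dvd n. mu a) = (if n = 1 then 1 else 0)"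
proof -
  let ?F = "prime_factors n"
  have inj: "inj_on Prod (Pow ?F)"
  proof (rule inj_on_inverseI[where g = prime_factors])
    fix T assume "T \<in> Pow ?F"
    then show "prime_factors (\<Prod>T) = T"
      using finite_subset[of T ?F] by (intro prime_factors_prod_primes) auto
  qed
  have "(\<Sum>a | a dvd n. mu a) = (\<Sum>a | a dvd n \<and> squarefree a. mu a)"
    using assms by (intro sum.mono_neutral_right) (auto simp: mu_def)
  also have "\<dots> = (\<Sum>T\<in>Pow ?F. mu (\<Prod>T))"
    unfolding squarefree_divisors_eq[OF assms] using inj by (simp add: sum.reindex)
  also have "\<dots> = (\<Sum>T\<in>Pow ?F. (-1) ^ card T)"
    by (intro sum.cong refl mu_prod_primes) (auto intro: finite_subset)
  also have "\<dots> = (if n = 1 then 1 else 0)"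
  proof (cases "n = 1")
    case False
    then have "?F \<noteq> {}"
      using assms by (simp add: prime_factorization_empty_iff)
    then have "{} \<subset> ?F" by blast
    then show ?thesis
      using False card_subsupersets_even_odd[of ?F "{}"]
      by (simp add: sum_alternating_cancels)
  qed simp
  finally show ?thesis .
qed

lemma sum_mu_dvd_coprime:
  assumes "0 < d" "0 < k"
  shows "(\<Sum>a | a dvd d. if a dvd k then mu a else 0) = (if coprime d k then 1 else 0)"
proof -
  have "(\<Sum>a | a dvd d. if a dvd k then mu a else 0) = (\<Sum>a \<in> {a \<in> {a. a dvd d}. a dvd k}. mu a)"
    using assms(1) by (intro sum.inter_filter[symmetric]) simp
  also have "\<dots> = (\<Sum>a | a dvd gcd d k. mu a)"
    by (intro sum.cong) auto
  also have "\<dots> = (if gcd d k = 1 then 1 else 0)"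
    using assms by (intro sum_mu_divisors) simp
  finally show ?thesis
    by (simp only: coprime_iff_gcd_eq_1)
qed

text \<open>\<open>dvd_power_of v d\<close> is the paper's \<open>v | d\<^sup>\<infinity>\<close>.\<close>

definition dvd_power_of :: "nat \<Rightarrow> nat \<Rightarrow> bool" where
  "dvd_power_of v d \<longleftrightarrow> 0 < v \<and> (\<forall>q. prime q \<longrightarrow> q dvd v \<longrightarrow> q dvd d)"

lemma coprime_dvd_power_of:
  assumes "dvd_power_of v d" "coprime d m"
  shows "coprime v m"
proof (rule ccontr)
  assume "\<not> coprime v m"
  then have "gcd v m \<noteq> 1"
    by (metis coprime_iff_gcd_eq_1)
  then obtain q where q: "prime q" "q dvd gcd v m"
    using prime_factor_nat by blast
  then have "q dvd d" "q dvd m"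
    using assms(1) unfolding dvd_power_of_def by auto
  then have "is_unit q"
    using coprime_common_divisor[OF assms(2)] by simp
  then show False
    using q(1) not_prime_unit by auto
qed

lemma dvd_power_of_part_exists:
  assumes "0 < n"
  obtains v where "dvd_power_of v d" "v dvd n" "coprime d (n div v)"
  using assms
proof (induction n arbitrary: thesis rule: less_induct)
  case (less n)
  show ?case
  proof (cases "coprime d n")
    case True
    then show ?thesis by (intro less.prems(1)[of 1]) (auto simp: dvd_power_of_def)
  next
    case False
    then have "gcd d n \<noteq> 1"
      by (metis coprime_iff_gcd_eq_1)
    then obtain q where "prime q" "q dvd gcd d n"
      using prime_factor_nat by blast
    then have q: "prime q" "q dvd d" "q dvd n"
      by auto
    then obtain m where m: "n = q * m" by blast
    have "0 < m" "m < n"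
      using m less.prems(2) prime_gt_1_nat[OF q(1)] by auto
    then obtain w where w: "dvd_power_of w d" "w dvd m" "coprime d (m div w)"
      using less.IH by blast
    then obtain u where u: "m = w * u" by blast
    have "0 < w" "0 < q"
      using w(1) prime_gt_0_nat[OF q(1)] by (simp_all add: dvd_power_of_def)
    show ?thesis
    proof (rule less.prems(1))
      show "dvd_power_of (q * w) d"
        unfolding dvd_power_of_def
      proof (intro conjI allI impI)
        show "0 < q * w"
          using \<open>0 < w\<close> \<open>0 < q\<close> by simp
        fix r assume r: "prime r" "r dvd q * w"
        then consider "r dvd q" | "r dvd w"
          by (auto simp: prime_dvd_mult_iff)
        then show "r dvd d"
        proof cases
          case 1
          then show ?thesis using primes_dvd_imp_eq[OF r(1) q(1)] q(2) by simp
        next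
          case 2
          then show ?thesis using r(1) w(1) by (simp add: dvd_power_of_def)
        qed
      qed
      show "q * w dvd n"
        using m u by simp
      show "coprime d (n div (q * w))"
        using w(3) m u \<open>0 < w\<close> \<open>0 < q\<close> by simp
    qed
  qed
qed

lemma dvd_power_of_part_unique:
  assumes "dvd_power_of v d" "v dvd n" "coprime d (n div v)"
    and "dvd_power_of w d" "w dvd n" "coprime d (n div w)"
  shows "v = w"
proof (rule dvd_antisym)
  have "v dvd w * (n div w)" using assms(2,5) by simp
  then show "v dvd w"
    by (simp add: coprime_dvd_mult_left_iff[OF coprime_dvd_power_of[OF assms(1,6)]])
  have "w dvd v * (n div v)" using assms(2,5) by simp
  then show "w dvd v"
    by (simp add: coprime_dvd_mult_left_iff[OF coprime_dvd_power_of[OF assms(4,3)]])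
qed

lemma sum_mu_dvd_power_of:
  assumes "0 < d" "0 < n" "dvd_power_of v d"
    and v0: "dvd_power_of v0 d" "v0 dvd n" "coprime d (n div v0)"
  shows "(\<Sum>a | a dvd d. if a * v dvd n then mu a else 0) = (if v = v0 then 1 else 0)"
proof (cases "v dvd n")
  case False
  then have "v \<noteq> v0" using v0(2) by blast
  moreover have "\<not> a * v dvd n" for a using False dvd_mult_right by meson
  ultimately show ?thesis by simp
next
  case True
  then obtain k where k: "n = v * k" by blast
  have "0 < v" "0 < k" using assms(2,3) k by (auto simp: dvd_power_of_def)
  then have "a * v dvd n \<longleftrightarrow> a dvd k" for a
    using k by (simp add: mult.commute)
  then have "(\<Sum>a | a dvd d. if a * v dvd n then mu a else 0) = (if coprime d k then 1 else 0)"
    using sum_mu_dvd_coprime[OF assms(1) \<open>0 < k\<close>] by simp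
  moreover have "coprime d k \<longleftrightarrow> v = v0"
  proof
    assume "coprime d k"
    then show "v = v0"
      using dvd_power_of_part_unique[OF assms(3) True _ v0] k \<open>0 < v\<close> by simp
  next
    assume "v = v0"
    then show "coprime d k"
      using v0(3) k \<open>0 < v\<close> by simp
  qed
  ultimately show ?thesis by simp
qed

lemma has_sum_mu_dvd_power_of:
  assumes "0 < d" "0 < r" "0 < n"
  shows "((\<lambda>v. \<Sum>a | a dvd d. of_int (mu a) * (if d * v dvd r * n \<and> a * v dvd n then 1 else 0))
           has_sum (if d dvd r then 1 else 0 :: real)) {v. dvd_power_of v d}"
proof -
  obtain v0 where v0: "dvd_power_of v0 d" "v0 dvd n" "coprime d (n div v0)"
    using dvd_power_of_part_exists[OF assms(3)] by blast
  obtain k where k: "n = v0 * k" using v0(2) by blast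
  have "0 < v0" using v0(1) by (simp add: dvd_power_of_def)
  have "d * v0 dvd r * n \<longleftrightarrow> v0 * d dvd v0 * (r * k)"
    using k by (simp add: ac_simps)
  also have "\<dots> \<longleftrightarrow> d dvd r * k"
    using \<open>0 < v0\<close> by (rule nat_mult_dvd_cancel1)
  also have "\<dots> \<longleftrightarrow> d dvd r"
    using v0(3) k \<open>0 < v0\<close> coprime_dvd_mult_left_iff by simp
  finally have v0_dvd: "d * v0 dvd r * n \<longleftrightarrow> d dvd r" .
  have split: "(\<Sum>a | a dvd d. of_int (mu a) * (if C \<and> a * v dvd n then 1 else 0))
      = (if C then of_int (\<Sum>a | a dvd d. if a * v dvd n then mu a else 0) else (0 :: real))" for C v
    by (cases C) (auto intro!: sum.cong)
  have "(\<Sum>a | a dvd d. of_int (mu a) * (if d * v dvd r * n \<and> a * v dvd n then 1 else 0))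
      = (if v = v0 then if d dvd r then 1 else 0 else 0 :: real)" if "dvd_power_of v d" for v
    unfolding split sum_mu_dvd_power_of[OF assms(1,3) that v0] using v0_dvd by auto
  then show ?thesis
    by (intro has_sum_finite_neutralI[where B = "{v0}"]) (auto simp: v0(1))
qed

lemma has_sum_mu_count:
  fixes P :: "'a set" and r n :: "'a \<Rightarrow> nat"
  assumes "finite P" "0 < d" "\<And>p. p \<in> P \<Longrightarrow> 0 < r p \<and> 0 < n p"
  shows "((\<lambda>v. \<Sum>a | a dvd d. of_int (mu a) * real (card {p \<in> P. d * v dvd r p * n p \<and> a * v dvd n p}))
           has_sum real (card {p \<in> P. d dvd r p})) {v. dvd_power_of v d}"
proof -
  have card: "real (card {p \<in> P. Q p}) = (\<Sum>p\<in>P. if Q p then 1 else 0)" for Q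
    using assms(1) by (simp add: sum.inter_filter[symmetric])
  have "((\<lambda>v. \<Sum>p\<in>P. \<Sum>a | a dvd d. of_int (mu a) * (if d * v dvd r p * n p \<and> a * v dvd n p then 1 else 0))
          has_sum (\<Sum>p\<in>P. if d dvd r p then 1 else 0 :: real)) {v. dvd_power_of v d}"
    by (rule has_sum_sum[OF assms(1)], rule has_sum_mu_dvd_power_of) (use assms in auto)
  then show ?thesis
    unfolding card sum_distrib_left by (subst sum.swap) simp
qed

definition admissible_primes :: "int \<Rightarrow> int \<Rightarrow> real \<Rightarrow> nat set" where
  "admissible_primes a1 a2 x = {p. prime p \<and> real p \<le> x \<and> \<not> int p dvd a2 * disc a1 a2}"

lemma finite_admissible_primes: "finite (admissible_primes a1 a2 x)"
  by (rule finite_subset[of _ "{..nat \<lfloor>x\<rfloor>}"]) (auto simp: admissible_primes_def le_nat_floor)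

lemma RU_eq_card: "RU a1 a2 d x = card {p \<in> admissible_primes a1 a2 x. d dvd rhoU a1 a2 p}"
  unfolding RU_def admissible_primes_def by (rule arg_cong[where f = card]) auto

lemma piU_eq_card:
  "piU a1 a2 n m x = card {p \<in> admissible_primes a1 a2 x.
     n dvd rhoU a1 a2 p * nat (iotaU a1 a2 p) \<and> m dvd nat (iotaU a1 a2 p)}"
  unfolding piU_def
proof (intro arg_cong[where f = card] Collect_cong)
  fix p
  show "(prime p \<and> real p \<le> x \<and> \<not> int p dvd a2 * disc a1 a2 \<and>
          [int p = symb (disc a1 a2) p] (mod int n) \<and> int m dvd iotaU a1 a2 p)
      \<longleftrightarrow> (p \<in> admissible_primes a1 a2 x \<and>
          n dvd rhoU a1 a2 p * nat (iotaU a1 a2 p) \<and> m dvd nat (iotaU a1 a2 p))"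
  proof (cases "p \<in> admissible_primes a1 a2 x")
    case True
    then have p: "prime p" "\<not> int p dvd a2 * disc a1 a2"
      by (auto simp: admissible_primes_def)
    have k: "iotaU a1 a2 p = int (nat (iotaU a1 a2 p))"
      using rhoU_mult_iotaU(3)[OF p] by simp
    have "int p - symb (disc a1 a2) p = int (rhoU a1 a2 p * nat (iotaU a1 a2 p))"
      using rhoU_mult_iotaU(1,3)[OF p] by simp
    then have "[int p = symb (disc a1 a2) p] (mod int n) \<longleftrightarrow> n dvd rhoU a1 a2 p * nat (iotaU a1 a2 p)"
      unfolding cong_iff_dvd_diff by (simp only: int_dvd_int_iff)
    moreover have "int m dvd iotaU a1 a2 p \<longleftrightarrow> m dvd nat (iotaU a1 a2 p)"
      by (subst k) (rule int_dvd_int_iff)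
    ultimately show ?thesis
      using True by (simp add: admissible_primes_def)
  qed (auto simp: admissible_primes_def)
qed

theorem lemma6p1:
  fixes a1 a2 :: int and d :: nat and x :: real
  assumes "a1 \<noteq> 0" and "a2 \<noteq> 0"
    and "\<not> (\<exists>n::nat. 0 < n \<and> (lalpha a1 a2 / lbeta a1 a2) ^ n = 1)"
    and "\<not> (\<exists>k::int. disc a1 a2 = k ^ 2)"
    and "0 < d" and "1 < x"
  shows "((\<lambda>v. \<Sum>a | a dvd d. of_int (mu a) * real (piU a1 a2 (d * v) (a * v) x))
           has_sum real (RU a1 a2 d x))
         {v::nat. 0 < v \<and> (\<forall>q. prime q \<longrightarrow> q dvd v \<longrightarrow> q dvd d)}"
proof -
  \<comment> \<open>Only \<open>0 < d\<close> is used: the identity holds for every Lucas sequence, because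
    \<open>\<rho>\<^sub>U(p) | p - (\<Delta>/p)\<close> for all primes \<open>p \<nmid> a\<^sub>2\<Delta>\<close>.\<close>
  have "0 < rhoU a1 a2 p \<and> 0 < nat (iotaU a1 a2 p)" if "p \<in> admissible_primes a1 a2 x" for p
    using that rhoU_mult_iotaU(2,3) by (auto simp: admissible_primes_def)
  from has_sum_mu_count[OF finite_admissible_primes \<open>0 < d\<close> this]
  show ?thesis
    unfolding piU_eq_card RU_eq_card dvd_power_of_def .
qed

end
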